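(* For $n\ge 2$, the expected number of indices $k\in\{2,\dots,n\}$ such that the $(k-1)$-th and $k$-th boundary steps are both west steps, in a uniformly random type-B permutation tableau of size $n$, equals \[ \frac{14n-25}{24}+\frac{1}{2n}. \]
   Context: A Ferrers diagram is a left-justified array of cells whose row lengths weakly decrease from top to bottom (rows of length $0$ are allowed). Its half-perimeter is the number of rows plus the number of columns. Its southeast boundary, traversed from the northeast corner to the southwest corner, consists of $n$ unit steps, each south or west; south steps correspond to rows and west steps to columns. If the diagram has $c$ columns, the shifted Ferrers diagram is obtained by inserting $c$ new left-justified rows above it, of lengths $c,c-1,\dots,1$ from top to bottom; the rightmost cell of each inserted row is a diagonal cell. A type-B permutation tableau of size $n$ is a filling of a shifted Ferrers diagram of half-perimeter $n$ with $0$'s and $1$'s such that: (1) every column contains at least one $1$; (2) no $0$ has both a $1$ above it in its column and a $1$ to its left in its row; (3) if a diagonal cell contains $0$ then every cell of its row contains $0$. The boundary steps of the shifted diagram are those of the underlying Ferrers diagram. Let $\mathcal{B}_n$ be the set of such tableaux with uniform probability measure $\mathbb{P}_n$ and expectation $\mathbb{E}_n$. *)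

theory Defs
  imports Complex_Main
begin

datatype step = South | West

text \<open>A boundary word of the underlying Ferrers diagram, read from the NE corner
to the SW corner. South steps are rows, West steps are columns.\<close>

definition ncols :: "step list \<Rightarrow> nat" where
  "ncols w = length (filter (\<lambda>x. x = West) w)"

definition orig_rows :: "step list \<Rightarrow> nat list" where
  "orig_rows w = map (\<lambda>i. length (filter (\<lambda>x. x = West) (drop (Suc i) w)))
                     (filter (\<lambda>i. w ! i = South) [0..<length w])"

text \<open>The c inserted rows form the staircase whose diagonal cell is the top cell of each
column: inserted row r (r < c) consists of columns 0..r and its rightmost cell
(r,r) is the diagonal cell.  Columns are indexed from the left starting at 0.\<close>
definition shifted_rows :: "step list \<Rightarrow> nat list" where
  "shifted_rows w = map Suc [0..<ncols w] @ orig_rows w"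

definition cells :: "step list \<Rightarrow> (nat \<times> nat) set" where
  "cells w = {(r, j). r < length (shifted_rows w) \<and> j < shifted_rows w ! r}"

text \<open>A type-B permutation tableau of size n: boundary word w of length n and a
0/1 filling f (True = 1) of the cells of the shifted diagram (False outside).\<close>
definition is_typeB_tableau :: "nat \<Rightarrow> step list \<Rightarrow> (nat \<times> nat \<Rightarrow> bool) \<Rightarrow> bool" where
  "is_typeB_tableau n w f \<longleftrightarrow>
     length w = n \<and>
     (\<forall>p. p \<notin> cells w \<longrightarrow> \<not> f p) \<and>
     (\<forall>j < ncols w. \<exists>r. (r, j) \<in> cells w \<and> f (r, j)) \<and>
     (\<forall>r j. (r, j) \<in> cells w \<and> \<not> f (r, j) \<longrightarrow>
            \<not> ((\<exists>r' < r. f (r', j)) \<and> (\<exists>j' < j. f (r, j')))) \<and>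
     (\<forall>r < ncols w. \<not> f (r, r) \<longrightarrow> (\<forall>j. \<not> f (r, j)))"

definition typeB_tableaux :: "nat \<Rightarrow> (step list \<times> (nat \<times> nat \<Rightarrow> bool)) set" where
  "typeB_tableaux n = {(w, f). is_typeB_tableau n w f}"

definition WW_count :: "nat \<Rightarrow> step list \<Rightarrow> nat" where
  "WW_count n w = card {k \<in> {2..n}. w ! (k - 2) = West \<and> w ! (k - 1) = West}"

end

theory Submission
  imports Defs
begin

text \<open>Build the boundary word from its northeast end. Appending a South step adds an empty row;
  appending a West step adds a new leftmost column together with a new top row consisting of a single
  diagonal cell. The new column may hold 1's only in the new row and in the "free" rows of the old
  tableau, and its choice determines which rows stay free. Weighting each tableau by y to the number
  of its free rows gives a generating function with
  \<Phi>(w South, y) = y \<Phi>(w, y) and \<Phi>(w West, y) = 2y \<Phi>(w, y+1) - y \<Phi>(w, y),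
  so summing \<Phi>(w, y) over all words w of length n gives 2^n y(y+1)\<dots>(y+n-1).
  At y = 1 this counts the 2^n n! tableaux; prescribing West steps at two adjacent positions and
  applying the West recurrence twice gives their weighted number, and summing over the position gives
  the expectation.\<close>

lemma ncols_snoc: "ncols (w @ [x]) = ncols w + (if x = West then 1 else 0)"
  by (simp add: ncols_def)

lemma orig_rows_snoc_South: "orig_rows (w @ [South]) = orig_rows w @ [0]"
proof -
  have "filter (\<lambda>i. (w @ [South]) ! i = South) [0..<length w] = filter (\<lambda>i. w ! i = South) [0..<length w]"
    by (rule filter_cong) (auto simp: nth_append)
  then show ?thesis
    by (auto simp: orig_rows_def intro!: map_cong)
qed

lemma orig_rows_snoc_West: "orig_rows (w @ [West]) = map Suc (orig_rows w)"
proof -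
  have "filter (\<lambda>i. (w @ [West]) ! i = South) [0..<length w] = filter (\<lambda>i. w ! i = South) [0..<length w]"
    by (rule filter_cong) (auto simp: nth_append)
  then show ?thesis
    by (auto simp: orig_rows_def intro!: map_cong)
qed

lemma shifted_rows_snoc_South: "shifted_rows (w @ [South]) = shifted_rows w @ [0]"
  by (simp add: shifted_rows_def ncols_snoc orig_rows_snoc_South)

lemma shifted_rows_snoc_West: "shifted_rows (w @ [West]) = Suc 0 # map Suc (shifted_rows w)"
proof -
  have "map Suc [0..<Suc (ncols w)] = Suc 0 # map Suc (map Suc [0..<ncols w])"
    by (simp add: upt_conv_Cons map_Suc_upt del: upt_Suc)
  then show ?thesis
    by (simp add: shifted_rows_def ncols_snoc orig_rows_snoc_West del: upt_Suc)
qed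

definition nrows :: "step list \<Rightarrow> nat" where
  "nrows w = length (shifted_rows w)"

lemma nrows_snoc: "nrows (w @ [x]) = Suc (nrows w)"
  by (cases x) (simp_all add: nrows_def shifted_rows_snoc_South shifted_rows_snoc_West)

lemma ncols_le_nrows: "ncols w \<le> nrows w"
  by (simp add: nrows_def shifted_rows_def)

lemma cells_Nil: "cells [] = {}"
  by (simp add: cells_def shifted_rows_def ncols_def orig_rows_def)

lemma cells_snoc_South: "cells (w @ [South]) = cells w"
  by (auto simp: cells_def shifted_rows_snoc_South nth_append less_Suc_eq split: if_splits)

lemma cells_snoc_West_first_column: "(r, 0) \<in> cells (w @ [West]) \<longleftrightarrow> r \<le> nrows w"
  by (cases r) (auto simp: cells_def shifted_rows_snoc_West nrows_def)

lemma cells_snoc_West_top_row: "(0, Suc j) \<notin> cells (w @ [West])"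
  by (auto simp: cells_def shifted_rows_snoc_West)

lemma cells_snoc_West_Suc: "(Suc r, Suc j) \<in> cells (w @ [West]) \<longleftrightarrow> (r, j) \<in> cells w"
  by (auto simp: cells_def shifted_rows_snoc_West)

lemma cells_less_nrows: "(r, j) \<in> cells w \<Longrightarrow> r < nrows w"
  by (auto simp: cells_def nrows_def)

lemma finite_cells: "finite (cells w)"
proof -
  have "cells w \<subseteq> {..<nrows w} \<times> {..<Max (set (shifted_rows w))}"
    by (auto simp: cells_def nrows_def intro: order.strict_trans2)
  then show ?thesis
    by (rule finite_subset) simp
qed

definition tableaux_of :: "step list \<Rightarrow> (nat \<times> nat \<Rightarrow> bool) set" where
  "tableaux_of w = {f. is_typeB_tableau (length w) w f}"

lemma tableaux_ofI:
  assumes "\<And>p. p \<notin> cells w \<Longrightarrow> \<not> f p"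
    and "\<And>j. j < ncols w \<Longrightarrow> \<exists>r. (r, j) \<in> cells w \<and> f (r, j)"
    and "\<And>r j r' j'. (r, j) \<in> cells w \<Longrightarrow> \<not> f (r, j) \<Longrightarrow> r' < r \<Longrightarrow> f (r', j) \<Longrightarrow> j' < j \<Longrightarrow> \<not> f (r, j')"
    and "\<And>r j. r < ncols w \<Longrightarrow> \<not> f (r, r) \<Longrightarrow> \<not> f (r, j)"
  shows "f \<in> tableaux_of w"
  using assms unfolding tableaux_of_def is_typeB_tableau_def by blast

lemma tableaux_ofD:
  assumes "f \<in> tableaux_of w"
  shows "\<And>p. p \<notin> cells w \<Longrightarrow> \<not> f p"
    and "\<And>j. j < ncols w \<Longrightarrow> \<exists>r. (r, j) \<in> cells w \<and> f (r, j)"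
    and "\<And>r j r' j'. (r, j) \<in> cells w \<Longrightarrow> \<not> f (r, j) \<Longrightarrow> r' < r \<Longrightarrow> f (r', j) \<Longrightarrow> j' < j \<Longrightarrow> \<not> f (r, j')"
    and "\<And>r j. r < ncols w \<Longrightarrow> \<not> f (r, r) \<Longrightarrow> \<not> f (r, j)"
  using assms unfolding tableaux_of_def is_typeB_tableau_def by blast+

lemma finite_tableaux_of: "finite (tableaux_of w)"
proof -
  have "tableaux_of w \<subseteq> (\<lambda>S p. p \<in> S) ` Pow (cells w)"
  proof
    fix f assume "f \<in> tableaux_of w"
    then have "f = (\<lambda>p. p \<in> {p \<in> cells w. f p})"
      using tableaux_ofD(1) by fastforce
    then show "f \<in> (\<lambda>S p. p \<in> S) ` Pow (cells w)" by blast
  qed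
  then show ?thesis
    by (meson finite_Pow_iff finite_cells finite_imageI finite_subset)
qed

lemma tableaux_of_Nil: "tableaux_of [] = {\<lambda>_. False}"
  by (auto simp: tableaux_of_def is_typeB_tableau_def cells_Nil ncols_def)

lemma tableaux_of_snoc_South: "tableaux_of (w @ [South]) = tableaux_of w"
  by (simp add: tableaux_of_def is_typeB_tableau_def cells_snoc_South ncols_snoc)

text \<open>A new leftmost column may hold a 1 in row r only if no 0 of row r has a 1 above it (the new 1
  would lie to its left) and, if r is an inserted row, its diagonal cell holds a 1.\<close>
definition free_rows :: "step list \<Rightarrow> (nat \<times> nat \<Rightarrow> bool) \<Rightarrow> nat set" where
  "free_rows w f = {r. r < nrows w \<and> (r < ncols w \<longrightarrow> f (r, r)) \<and>
     (\<forall>j. (r, j) \<in> cells w \<and> \<not> f (r, j) \<longrightarrow> \<not> (\<exists>r' < r. f (r', j)))}"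

lemma free_rows_less_nrows: "r \<in> free_rows w f \<Longrightarrow> r < nrows w"
  by (simp add: free_rows_def)

lemma finite_free_rows: "finite (free_rows w f)"
  by (rule finite_subset[of _ "{..<nrows w}"]) (auto dest: free_rows_less_nrows)

lemma free_rows_Nil: "free_rows [] f = {}"
  by (simp add: free_rows_def nrows_def shifted_rows_def ncols_def orig_rows_def)

lemma free_rows_snoc_South: "free_rows (w @ [South]) f = insert (nrows w) (free_rows w f)"
  using ncols_le_nrows[of w]
  by (auto simp: free_rows_def cells_snoc_South ncols_snoc nrows_snoc less_Suc_eq
           dest: cells_less_nrows)

lemma card_free_rows_snoc_South: "card (free_rows (w @ [South]) f) = Suc (card (free_rows w f))"
proof -
  have "nrows w \<notin> free_rows w f"
    using free_rows_less_nrows by blast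
  then show ?thesis
    by (simp add: free_rows_snoc_South finite_free_rows)
qed

text \<open>Appending a West step inserts a new top row and a new leftmost column, so the old filling
  moves one row down and one column to the right; H is the set of rows of the new column holding a 1.\<close>
definition add_column :: "(nat \<times> nat \<Rightarrow> bool) \<Rightarrow> nat set \<Rightarrow> nat \<times> nat \<Rightarrow> bool" where
  "add_column g H = (\<lambda>(r, j). if j = 0 then r \<in> H else if r = 0 then False else g (r - 1, j - 1))"

lemma add_column_simps [simp]:
  "add_column g H (r, 0) = (r \<in> H)"
  "add_column g H (0, Suc j) = False"
  "add_column g H (Suc r, Suc j) = g (r, j)"
  by (simp_all add: add_column_def)

lemma add_column_inject:
  assumes eq: "add_column g H = add_column g' H'"
  shows "g = g'" and "H = H'"
proof -
  show "g = g'"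
  proof
    fix p :: "nat \<times> nat"
    show "g p = g' p"
      using fun_cong[OF eq, of "(Suc (fst p), Suc (snd p))"] by simp
  qed
  show "H = H'"
    using fun_cong[OF eq, of "(_, 0)"] by auto
qed

definition column_choices :: "step list \<Rightarrow> (nat \<times> nat \<Rightarrow> bool) \<Rightarrow> nat set set" where
  "column_choices w g = {H. H \<subseteq> insert 0 (Suc ` free_rows w g) \<and> H \<noteq> {}}"

lemma finite_column_choices: "finite (column_choices w g)"
  by (rule finite_subset[of _ "Pow (insert 0 (Suc ` free_rows w g))"])
     (auto simp: column_choices_def finite_free_rows)

lemma column_choicesD:
  assumes "H \<in> column_choices w g"
  shows "H \<noteq> {}" and "Suc r \<in> H \<Longrightarrow> r \<in> free_rows w g" and "r \<in> H \<Longrightarrow> r \<le> nrows w"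
  using assms free_rows_less_nrows by (fastforce simp: column_choices_def)+

lemma add_column_in_tableaux_of:
  assumes g: "g \<in> tableaux_of w" and H: "H \<in> column_choices w g"
  shows "add_column g H \<in> tableaux_of (w @ [West])"
proof (rule tableaux_ofI)
  fix p assume p: "p \<notin> cells (w @ [West])"
  obtain r j where pe: "p = (r, j)" by fastforce
  show "\<not> add_column g H p"
  proof (cases j)
    case 0
    then show ?thesis
      using p pe column_choicesD(3)[OF H] by (auto simp: cells_snoc_West_first_column)
  next
    case (Suc j0)
    then show ?thesis
      using p pe tableaux_ofD(1)[OF g] by (cases r) (auto simp: cells_snoc_West_Suc)
  qed
next
  fix j assume j: "j < ncols (w @ [West])"
  show "\<exists>r. (r, j) \<in> cells (w @ [West]) \<and> add_column g H (r, j)"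
  proof (cases j)
    case 0
    obtain r where "r \<in> H" using column_choicesD(1)[OF H] by blast
    then show ?thesis
      using 0 column_choicesD(3)[OF H] cells_snoc_West_first_column by auto
  next
    case (Suc j0)
    then obtain r where "(r, j0) \<in> cells w" "g (r, j0)"
      using j tableaux_ofD(2)[OF g] by (auto simp: ncols_snoc)
    then show ?thesis
      using Suc cells_snoc_West_Suc by (intro exI[of _ "Suc r"]) auto
  qed
next
  fix r j r' j'
  assume c: "(r, j) \<in> cells (w @ [West])" and z: "\<not> add_column g H (r, j)"
    and r': "r' < r" "add_column g H (r', j)" and j': "j' < j"
  obtain r0 j0 r1 where eqs: "r = Suc r0" "j = Suc j0" "r' = Suc r1"
    using r' j' by (cases r; cases j; cases r') auto
  then have blocked: "(r0, j0) \<in> cells w" "\<not> g (r0, j0)" "r1 < r0" "g (r1, j0)"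
    using c z r' cells_snoc_West_Suc by auto
  show "\<not> add_column g H (r, j')"
  proof (cases j')
    case 0
    have "r0 \<notin> free_rows w g"
      using blocked by (auto simp: free_rows_def)
    then show ?thesis
      using 0 eqs column_choicesD(2)[OF H] by auto
  next
    case (Suc j1)
    then show ?thesis
      using tableaux_ofD(3)[OF g blocked, of j1] eqs j' by simp
  qed
next
  fix r j assume r: "r < ncols (w @ [West])" and d: "\<not> add_column g H (r, r)"
  show "\<not> add_column g H (r, j)"
  proof (cases r)
    case 0
    then show ?thesis using d by (cases j) auto
  next
    case (Suc r0)
    then have "r0 < ncols w" "\<not> g (r0, r0)"
      using r d by (simp_all add: ncols_snoc)
    then show ?thesis
      using Suc tableaux_ofD(4)[OF g] column_choicesD(2)[OF H]
      by (cases j) (auto simp: free_rows_def)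
  qed
qed

lemma inner_filling_in_tableaux_of:
  assumes F: "F \<in> tableaux_of (w @ [West])"
  shows "(\<lambda>(r, j). F (Suc r, Suc j)) \<in> tableaux_of w"
proof (rule tableaux_ofI)
  fix p assume "p \<notin> cells w"
  then show "\<not> (\<lambda>(r, j). F (Suc r, Suc j)) p"
    using tableaux_ofD(1)[OF F] cells_snoc_West_Suc by (cases p) auto
next
  fix j assume "j < ncols w"
  then obtain r where r: "(r, Suc j) \<in> cells (w @ [West])" "F (r, Suc j)"
    using tableaux_ofD(2)[OF F, of "Suc j"] by (auto simp: ncols_snoc)
  then obtain r0 where "r = Suc r0"
    using cells_snoc_West_top_row by (cases r) auto
  then show "\<exists>r. (r, j) \<in> cells w \<and> (\<lambda>(r, j). F (Suc r, Suc j)) (r, j)"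
    using r cells_snoc_West_Suc by auto
next
  fix r j r' j'
  assume "(r, j) \<in> cells w" "\<not> (\<lambda>(r, j). F (Suc r, Suc j)) (r, j)" "r' < r"
    "(\<lambda>(r, j). F (Suc r, Suc j)) (r', j)" "j' < j"
  then show "\<not> (\<lambda>(r, j). F (Suc r, Suc j)) (r, j')"
    using tableaux_ofD(3)[OF F, of "Suc r" "Suc j" "Suc r'" "Suc j'"] cells_snoc_West_Suc by auto
next
  fix r j assume "r < ncols w" "\<not> (\<lambda>(r, j). F (Suc r, Suc j)) (r, r)"
  then show "\<not> (\<lambda>(r, j). F (Suc r, Suc j)) (r, j)"
    using tableaux_ofD(4)[OF F, of "Suc r" "Suc j"] by (auto simp: ncols_snoc)
qed

lemma first_column_in_column_choices:
  assumes F: "F \<in> tableaux_of (w @ [West])"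
  shows "{r. F (r, 0)} \<in> column_choices w (\<lambda>(r, j). F (Suc r, Suc j))"
proof -
  let ?g = "\<lambda>(r, j). F (Suc r, Suc j)"
  have nonempty: "\<exists>r. F (r, 0)"
    using tableaux_ofD(2)[OF F, of 0] by (auto simp: ncols_snoc)
  have free: "r0 \<in> free_rows w ?g" if Fr: "F (Suc r0, 0)" for r0
  proof -
    have "(Suc r0, 0) \<in> cells (w @ [West])"
      using Fr tableaux_ofD(1)[OF F] by blast
    then have "r0 < nrows w"
      by (simp add: cells_snoc_West_first_column)
    moreover have "r0 < ncols w \<longrightarrow> ?g (r0, r0)"
      using tableaux_ofD(4)[OF F, of "Suc r0" 0] Fr by (auto simp: ncols_snoc)
    moreover have "\<not> (\<exists>r' < r0. ?g (r', j))" if "(r0, j) \<in> cells w" "\<not> ?g (r0, j)" for j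
      using tableaux_ofD(3)[OF F, of "Suc r0" "Suc j" _ 0] Fr that cells_snoc_West_Suc by auto
    ultimately show ?thesis
      by (auto simp: free_rows_def)
  qed
  have "r \<in> insert 0 (Suc ` free_rows w ?g)" if "F (r, 0)" for r
    using that free by (cases r) auto
  then show ?thesis
    using nonempty by (auto simp: column_choices_def)
qed

lemma add_column_inner_first_column:
  assumes F: "F \<in> tableaux_of (w @ [West])"
  shows "add_column (\<lambda>(r, j). F (Suc r, Suc j)) {r. F (r, 0)} = F"
proof
  fix p :: "nat \<times> nat"
  obtain r j where "p = (r, j)" by fastforce
  then show "add_column (\<lambda>(r, j). F (Suc r, Suc j)) {r. F (r, 0)} p = F p"
    using tableaux_ofD(1)[OF F] cells_snoc_West_top_row
    by (cases r; cases j) auto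
qed

lemma tableaux_of_snoc_West:
  "tableaux_of (w @ [West]) = (\<lambda>(g, H). add_column g H) ` Sigma (tableaux_of w) (column_choices w)"
proof (intro equalityI subsetI)
  fix F assume F: "F \<in> tableaux_of (w @ [West])"
  then show "F \<in> (\<lambda>(g, H). add_column g H) ` Sigma (tableaux_of w) (column_choices w)"
    using inner_filling_in_tableaux_of[OF F] first_column_in_column_choices[OF F]
      add_column_inner_first_column[OF F]
    by (auto intro!: image_eqI[of F _ "((\<lambda>(r, j). F (Suc r, Suc j)), {r. F (r, 0)})"])
qed (auto intro: add_column_in_tableaux_of)

text \<open>The new top row is free iff its diagonal cell holds a 1; an old row stays free unless the new
  column has a 0 in it below a 1.\<close>
definition free_rows_after_column :: "nat set \<Rightarrow> nat set \<Rightarrow> nat set" where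
  "free_rows_after_column A H = {r. r = 0 \<and> 0 \<in> H} \<union> Suc ` {r \<in> A. Suc r \<in> H \<or> (\<forall>x\<in>H. r < x)}"

lemma free_rows_add_column:
  "free_rows (w @ [West]) (add_column g H) = free_rows_after_column (free_rows w g) H"
proof (rule set_eqI)
  fix r
  show "r \<in> free_rows (w @ [West]) (add_column g H) \<longleftrightarrow> r \<in> free_rows_after_column (free_rows w g) H"
  proof (cases r)
    case 0
    have "(0, j) \<in> cells (w @ [West]) \<Longrightarrow> j = 0" for j
      using cells_snoc_West_top_row by (cases j) auto
    then show ?thesis
      using 0 by (auto simp: free_rows_def free_rows_after_column_def nrows_snoc ncols_snoc)
  next
    case (Suc r0)
    let ?F = "add_column g H"
    have split_j: "(\<forall>j. P j) \<longleftrightarrow> P 0 \<and> (\<forall>j. P (Suc j))" for P :: "nat \<Rightarrow> bool"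
      by (metis not0_implies_Suc)
    let ?C = "\<lambda>j. (Suc r0, j) \<in> cells (w @ [West]) \<and> \<not> ?F (Suc r0, j) \<longrightarrow> \<not> (\<exists>r' < Suc r0. ?F (r', j))"
    have "?C 0 \<longleftrightarrow> (r0 < nrows w \<longrightarrow> Suc r0 \<in> H \<or> (\<forall>x\<in>H. r0 < x))"
      by (auto simp: cells_snoc_West_first_column less_Suc_eq_le not_less) (meson not_less)
    moreover have "?C (Suc j) \<longleftrightarrow> ((r0, j) \<in> cells w \<and> \<not> g (r0, j) \<longrightarrow> \<not> (\<exists>r' < r0. g (r', j)))" for j
      by (auto simp: cells_snoc_West_Suc Ex_less_Suc2)
    ultimately have "(\<forall>j. ?C j) \<longleftrightarrow> (r0 < nrows w \<longrightarrow> Suc r0 \<in> H \<or> (\<forall>x\<in>H. r0 < x)) \<and>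
          (\<forall>j. (r0, j) \<in> cells w \<and> \<not> g (r0, j) \<longrightarrow> \<not> (\<exists>r' < r0. g (r', j)))"
      using split_j[of ?C] by presburger
    then show ?thesis
      using Suc by (auto simp: free_rows_def free_rows_after_column_def nrows_snoc ncols_snoc)
  qed
qed

section \<open>Counting the choices of a new column\<close>

lemma sum_pow_card_Pow:
  fixes y :: "'a::comm_semiring_1"
  assumes "finite A"
  shows "(\<Sum>B\<in>Pow A. y ^ card B) = (y + 1) ^ card A"
  using prod_add[OF assms, of "\<lambda>_. y" "\<lambda>_. 1"] by simp

text \<open>If the 1's of a new column lie in the rows B, a row of A stays free iff it is in B or above all of B.\<close>
definition unblocked :: "'a::linorder set \<Rightarrow> 'a set \<Rightarrow> 'a set" where
  "unblocked A B = {r \<in> A. r \<in> B \<or> (\<forall>x\<in>B. r \<le> x)}"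

lemma unblocked_empty [simp]: "unblocked A {} = A"
  by (simp add: unblocked_def)

lemma sum_pow_card_unblocked:
  fixes y :: "'b::comm_ring_1"
  assumes "finite A"
  shows "(\<Sum>B\<in>Pow A. y ^ card (unblocked A B)) = y * (y + 1) ^ card A - y ^ Suc (card A) + y ^ card A"
  using assms
proof (induction A rule: finite_linorder_max_induct)
  case empty
  then show ?case by simp
next
  case (insert m A)
  have m: "m \<notin> A" using insert by auto
  have old: "unblocked (insert m A) B = (if B = {} then insert m A else unblocked A B)" if "B \<subseteq> A" for B
    using that insert(2) by (auto simp: unblocked_def) (meson not_less subsetD)
  have new: "unblocked (insert m A) (insert m B) = insert m (unblocked A B)" if "B \<subseteq> A" for B
    using that insert(2) by (auto simp: unblocked_def)
  have card_new: "card (unblocked (insert m A) (insert m B)) = Suc (card (unblocked A B))" if "B \<subseteq> A" for B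
  proof -
    have "finite (unblocked A B)" "m \<notin> unblocked A B"
      using insert(1) m by (auto simp: unblocked_def)
    then show ?thesis
      by (simp add: new[OF that])
  qed
  have "(\<Sum>B\<in>Pow (insert m A). y ^ card (unblocked (insert m A) B)) =
      (\<Sum>B\<in>Pow A. y ^ card (unblocked (insert m A) B)) +
      (\<Sum>B\<in>insert m ` Pow A. y ^ card (unblocked (insert m A) B))"
    unfolding Pow_insert using insert(1) m by (intro sum.union_disjoint) auto
  also have "(\<Sum>B\<in>insert m ` Pow A. y ^ card (unblocked (insert m A) B)) =
      (\<Sum>B\<in>Pow A. y * y ^ card (unblocked A B))"
  proof -
    have "inj_on (insert m) (Pow A)"
      using m by (auto simp: inj_on_def)
    then show ?thesis
      using card_new by (simp add: sum.reindex)
  qed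
  also have "(\<Sum>B\<in>Pow A. y ^ card (unblocked (insert m A) B)) =
      (\<Sum>B\<in>Pow A. y ^ card (unblocked A B)) + y ^ card A * (y - 1)"
  proof -
    have "(\<Sum>B\<in>Pow A. y ^ card (unblocked (insert m A) B)) =
        (\<Sum>B\<in>Pow A. y ^ card (unblocked A B) + (if B = {} then y ^ card A * (y - 1) else 0))"
      using m insert(1) old by (intro sum.cong) (auto simp: algebra_simps)
    then show ?thesis
      using insert(1) by (simp add: sum.distrib)
  qed
  finally show ?case
    using insert m by (simp add: sum_distrib_left[symmetric] algebra_simps)
qed

lemma nonempty_subsets_insert_0_Suc:
  "{H. H \<subseteq> insert 0 (Suc ` A) \<and> H \<noteq> {}} =
     (\<lambda>B. insert 0 (Suc ` B)) ` Pow A \<union> (\<lambda>B. Suc ` B) ` (Pow A - {{}})"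
proof (intro equalityI subsetI)
  fix H assume "H \<in> {H. H \<subseteq> insert 0 (Suc ` A) \<and> H \<noteq> {}}"
  then have H: "H \<subseteq> insert 0 (Suc ` A)" "H \<noteq> {}" by auto
  let ?B = "{r. Suc r \<in> H}"
  have "H - {0} = Suc ` ?B"
    using H(1) by (auto simp: image_iff)
  then have "H = (if 0 \<in> H then insert 0 (Suc ` ?B) else Suc ` ?B)"
    by auto
  moreover have "?B \<subseteq> A" using H(1) by auto
  ultimately show "H \<in> (\<lambda>B. insert 0 (Suc ` B)) ` Pow A \<union> (\<lambda>B. Suc ` B) ` (Pow A - {{}})"
    using H(2) by (auto split: if_splits)
qed auto

lemma sum_pow_card_free_rows_after_column:
  fixes y :: "'a::comm_ring_1"
  assumes A: "finite A"
  shows "(\<Sum>H | H \<subseteq> insert 0 (Suc ` A) \<and> H \<noteq> {}. y ^ card (free_rows_after_column A H))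
     = 2 * y * (y + 1) ^ card A - y ^ Suc (card A)"
proof -
  have inj_with_0: "inj_on (\<lambda>B. insert 0 (Suc ` B)) (Pow A)"
    by (rule inj_onI) (metis Diff_insert_absorb image_iff inj_image_eq_iff inj_Suc nat.distinct(1))
  have inj_without_0: "inj_on (\<lambda>B. Suc ` B) (Pow A - {{}})"
    by (rule inj_onI) (simp add: inj_image_eq_iff)
  have with_0: "free_rows_after_column A (insert 0 (Suc ` B)) = insert 0 (Suc ` B)" if "B \<subseteq> A" for B
    using that by (auto simp: free_rows_after_column_def)
  have without_0: "free_rows_after_column A (Suc ` B) = Suc ` unblocked A B" for B
    by (auto simp: free_rows_after_column_def unblocked_def less_Suc_eq_le)
  have "(\<Sum>H | H \<subseteq> insert 0 (Suc ` A) \<and> H \<noteq> {}. y ^ card (free_rows_after_column A H)) =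
      (\<Sum>B\<in>Pow A. y * y ^ card B) + (\<Sum>B\<in>Pow A - {{}}. y ^ card (unblocked A B))"
    unfolding nonempty_subsets_insert_0_Suc using A
    by (subst sum.union_disjoint)
       (auto simp: sum.reindex[OF inj_with_0] sum.reindex[OF inj_without_0] with_0 without_0
          card_image finite_subset intro!: sum.cong)
  also have "\<dots> = y * (y + 1) ^ card A + (y * (y + 1) ^ card A - y ^ Suc (card A))"
    using A by (simp add: sum_distrib_left[symmetric] sum_pow_card_Pow sum_diff1 sum_pow_card_unblocked)
  finally show ?thesis
    by (simp add: algebra_simps)
qed

section \<open>The generating function of free rows\<close>

definition tableau_gf :: "step list \<Rightarrow> 'a::comm_ring_1 \<Rightarrow> 'a" where
  "tableau_gf w y = (\<Sum>f\<in>tableaux_of w. y ^ card (free_rows w f))"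

lemma tableau_gf_Nil: "tableau_gf [] y = 1"
  by (simp add: tableau_gf_def tableaux_of_Nil free_rows_Nil)

lemma tableau_gf_at_1: "tableau_gf w 1 = of_nat (card (tableaux_of w))"
  by (simp add: tableau_gf_def)

lemma tableau_gf_snoc_South: "tableau_gf (w @ [South]) y = y * tableau_gf w y"
  by (simp add: tableau_gf_def tableaux_of_snoc_South card_free_rows_snoc_South sum_distrib_left)

lemma tableau_gf_snoc_West: "tableau_gf (w @ [West]) y = 2 * y * tableau_gf w (y + 1) - y * tableau_gf w y"
proof -
  have inj: "inj_on (\<lambda>(g, H). add_column g H) (Sigma (tableaux_of w) (column_choices w))"
    by (rule inj_onI) (auto dest: add_column_inject)
  have "tableau_gf (w @ [West]) y =
      (\<Sum>g\<in>tableaux_of w. \<Sum>H\<in>column_choices w g. y ^ card (free_rows_after_column (free_rows w g) H))"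
    unfolding tableau_gf_def tableaux_of_snoc_West sum.reindex[OF inj]
    by (subst sum.Sigma)
       (auto simp: finite_tableaux_of finite_column_choices free_rows_add_column intro!: sum.cong)
  also have "\<dots> = (\<Sum>g\<in>tableaux_of w. 2 * y * (y + 1) ^ card (free_rows w g) - y * y ^ card (free_rows w g))"
    unfolding column_choices_def
    by (simp add: sum_pow_card_free_rows_after_column finite_free_rows)
  finally show ?thesis
    by (simp add: tableau_gf_def sum_subtractf sum_distrib_left)
qed

definition words :: "nat \<Rightarrow> step list set" where
  "words n = {w. length w = n}"

lemma words_0: "words 0 = {[]}"
  by (auto simp: words_def)

lemma words_Suc: "words (Suc n) = Cons South ` words n \<union> Cons West ` words n"
proof (intro equalityI subsetI)
  fix w assume "w \<in> words (Suc n)"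
  then obtain x s where "w = x # s" "length s = n"
    by (auto simp: words_def length_Suc_conv)
  then show "w \<in> Cons South ` words n \<union> Cons West ` words n"
    by (cases x) (auto simp: words_def)
qed (auto simp: words_def)

lemma finite_words: "finite (words n)"
  by (induction n) (simp_all add: words_0 words_Suc)

lemma sum_words_Suc: "(\<Sum>w\<in>words (Suc n). F w) = (\<Sum>s\<in>words n. F (South # s) + F (West # s))"
  unfolding words_Suc
  by (subst sum.union_disjoint) (auto simp: finite_words sum.reindex sum.distrib)

lemma sum_words_add: "(\<Sum>w\<in>words (a + b). F w) = (\<Sum>p\<in>words a. \<Sum>s\<in>words b. F (p @ s))"
proof (induction a arbitrary: F)
  case 0
  then show ?case by (simp add: words_0)
next
  case (Suc a)
  then show ?case
    by (simp add: sum_words_Suc sum.distrib)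
qed

lemma sum_tableau_gf_append:
  "(\<Sum>s\<in>words r. tableau_gf (q @ s) y) = 2 ^ r * pochhammer y r * tableau_gf q (y + of_nat r)"
proof (induction r arbitrary: q y)
  case 0
  then show ?case by (simp add: words_0)
next
  case (Suc r)
  have "(\<Sum>s\<in>words (Suc r). tableau_gf (q @ s) y) =
      (\<Sum>s\<in>words r. tableau_gf ((q @ [South]) @ s) y) + (\<Sum>s\<in>words r. tableau_gf ((q @ [West]) @ s) y)"
    by (simp add: sum_words_Suc sum.distrib)
  also have "\<dots> = 2 ^ r * pochhammer y r *
      (tableau_gf (q @ [South]) (y + of_nat r) + tableau_gf (q @ [West]) (y + of_nat r))"
    by (simp only: Suc.IH distrib_left)
  also have "\<dots> = 2 ^ r * pochhammer y r * (2 * (y + of_nat r) * tableau_gf q (y + of_nat (Suc r)))"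
    by (simp add: tableau_gf_snoc_South tableau_gf_snoc_West algebra_simps)
  finally show ?case
    by (simp add: pochhammer_Suc algebra_simps)
qed

lemma sum_tableau_gf_words: "(\<Sum>w\<in>words n. tableau_gf w y) = 2 ^ n * pochhammer y n"
  using sum_tableau_gf_append[where q = "[]"] by (simp add: tableau_gf_Nil)

lemma typeB_tableaux_eq_Sigma: "typeB_tableaux n = Sigma (words n) tableaux_of"
proof -
  have "is_typeB_tableau n w f \<longleftrightarrow> length w = n \<and> is_typeB_tableau (length w) w f" for w f
    by (auto simp: is_typeB_tableau_def)
  then show ?thesis
    unfolding typeB_tableaux_def words_def tableaux_of_def by blast
qed

lemma card_typeB_tableaux: "card (typeB_tableaux n) = 2 ^ n * fact n"
proof -
  have "int (card (typeB_tableaux n)) = (\<Sum>w\<in>words n. tableau_gf w 1)"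
    unfolding typeB_tableaux_eq_Sigma
    by (subst card_SigmaI) (auto simp: finite_words finite_tableaux_of tableau_gf_at_1)
  also have "\<dots> = int (2 ^ n * fact n)"
    by (simp add: sum_tableau_gf_words flip: pochhammer_fact)
  finally show ?thesis
    by (simp only: of_nat_eq_iff)
qed

section \<open>Adjacent West steps\<close>

lemma WW_count_eq_card: "WW_count n w = card {j. j < n - 1 \<and> w ! j = West \<and> w ! Suc j = West}"
proof -
  have "{k \<in> {2..n}. w ! (k - 2) = West \<and> w ! (k - 1) = West} =
      (\<lambda>j. j + 2) ` {j. j < n - 1 \<and> w ! j = West \<and> w ! Suc j = West}"
  proof (intro equalityI subsetI)
    fix k assume "k \<in> {k \<in> {2..n}. w ! (k - 2) = West \<and> w ! (k - 1) = West}"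
    then show "k \<in> (\<lambda>j. j + 2) ` {j. j < n - 1 \<and> w ! j = West \<and> w ! Suc j = West}"
      by (intro image_eqI[of k _ "k - 2"]) (auto simp: Suc_diff_Suc numeral_2_eq_2)
  qed (auto simp: numeral_2_eq_2)
  then show ?thesis
    unfolding WW_count_def by (simp add: card_image inj_on_def)
qed

lemma sum_words_West_West_at:
  "(\<Sum>w\<in>words (j + (2 + r)). if w ! j = West \<and> w ! Suc j = West then F w else 0)
     = (\<Sum>p\<in>words j. \<Sum>s\<in>words r. F (p @ [West, West] @ s))"
proof -
  have "(\<Sum>w\<in>words (j + (2 + r)). if w ! j = West \<and> w ! Suc j = West then F w else 0) =
      (\<Sum>p\<in>words j. \<Sum>m\<in>words 2. \<Sum>s\<in>words r.
        if (p @ m @ s) ! j = West \<and> (p @ m @ s) ! Suc j = West then F (p @ m @ s) else 0)"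
    by (simp only: sum_words_add append_assoc)
  also have "\<dots> = (\<Sum>p\<in>words j. \<Sum>s\<in>words r. F (p @ [West, West] @ s))"
  proof (rule sum.cong)
    fix p assume "p \<in> words j"
    then have "length p = j" by (simp add: words_def)
    then show "(\<Sum>m\<in>words 2. \<Sum>s\<in>words r.
        if (p @ m @ s) ! j = West \<and> (p @ m @ s) ! Suc j = West then F (p @ m @ s) else 0) =
      (\<Sum>s\<in>words r. F (p @ [West, West] @ s))"
      by (simp add: numeral_2_eq_2 sum_words_Suc words_0 nth_append)
  qed simp
  finally show ?thesis .
qed

lemma tableau_gf_snoc_West_West:
  "tableau_gf (p @ [West, West]) x =
     4 * x * (x + 1) * tableau_gf p (x + 2) - 2 * x * (2 * x + 1) * tableau_gf p (x + 1) + x ^ 2 * tableau_gf p x"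
proof -
  have "p @ [West, West] = (p @ [West]) @ [West]" by simp
  then have "tableau_gf (p @ [West, West]) x =
      2 * x * (2 * (x + 1) * tableau_gf p (x + 1 + 1) - (x + 1) * tableau_gf p (x + 1))
      - x * (2 * x * tableau_gf p (x + 1) - x * tableau_gf p x)"
    by (simp only: tableau_gf_snoc_West)
  moreover have "x + 1 + 1 = x + 2"
    by (simp add: add.assoc)
  ultimately show ?thesis
    by (simp add: algebra_simps power2_eq_square)
qed

lemma fact_mult_pochhammer: "fact m * pochhammer (of_nat m + 1) k = (fact (m + k) :: 'a::{semiring_char_0, comm_semiring_1})"
  unfolding pochhammer_fact pochhammer_product' by (simp add: add.commute)

lemma sum_tableau_gf_snoc_West_West:
  "(\<Sum>p\<in>words j. tableau_gf (p @ [West, West]) x) =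
     2 ^ j * (4 * x * (x + 1) * pochhammer (x + 2) j - 2 * x * (2 * x + 1) * pochhammer (x + 1) j
       + x ^ 2 * pochhammer x j)"
  by (simp add: tableau_gf_snoc_West_West sum.distrib sum_subtractf sum_tableau_gf_words
      flip: sum_distrib_left) (simp add: algebra_simps)

lemma sum_tableau_gf_West_West_at:
  "(\<Sum>w\<in>words (j + (2 + r)). if w ! j = West \<and> w ! Suc j = West then tableau_gf w 1 else 0)
   = (2::real) ^ (j + r) *
       (4 * fact (j + r + 2) - 2 * (2 * real r + 3) * fact (j + r + 1) + (real r + 1) ^ 2 * fact (j + r))"
proof -
  define x :: real where "x = real r + 1"
  have "(\<Sum>w\<in>words (j + (2 + r)). if w ! j = West \<and> w ! Suc j = West then tableau_gf w 1 else 0) =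
      (\<Sum>p\<in>words j. \<Sum>s\<in>words r. tableau_gf ((p @ [West, West]) @ s) (1::real))"
    unfolding append_assoc by (rule sum_words_West_West_at)
  also have "\<dots> = 2 ^ r * fact r * (\<Sum>p\<in>words j. tableau_gf (p @ [West, West]) x)"
    by (simp only: sum_tableau_gf_append) (simp add: pochhammer_fact x_def sum_distrib_left add.commute)
  also have "\<dots> = 2 ^ (j + r) * (4 * (x * (x + 1) * fact r * pochhammer (x + 2) j)
      - 2 * (2 * x + 1) * (x * fact r * pochhammer (x + 1) j) + x ^ 2 * (fact r * pochhammer x j))"
    by (simp add: sum_tableau_gf_snoc_West_West power_add algebra_simps)
  finally have "(\<Sum>w\<in>words (j + (2 + r)). if w ! j = West \<and> w ! Suc j = West then tableau_gf w 1 else 0) =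
      2 ^ (j + r) * (4 * (x * (x + 1) * fact r * pochhammer (x + 2) j)
      - 2 * (2 * x + 1) * (x * fact r * pochhammer (x + 1) j) + x ^ 2 * (fact r * pochhammer x j))" .
  moreover have "x * (x + 1) * fact r = (fact (r + 2) :: real)" "x * fact r = (fact (r + 1) :: real)"
    by (simp_all add: x_def numeral_2_eq_2 algebra_simps)
  moreover have "x + 2 = of_nat (r + 2) + 1" "x + 1 = of_nat (r + 1) + 1" "x = of_nat r + 1"
    by (simp_all add: x_def)
  ultimately show ?thesis
    by (simp only: fact_mult_pochhammer) (simp add: ac_simps)
qed

lemma sum_typeB_tableaux_fst:
  "(\<Sum>T\<in>typeB_tableaux n. F (fst T)) = (\<Sum>w\<in>words n. F w * tableau_gf w (1::real))"
proof -
  have "(\<Sum>w\<in>words n. \<Sum>f\<in>tableaux_of w. F w) = (\<Sum>T\<in>Sigma (words n) tableaux_of. F (fst T))"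
    by (subst sum.Sigma) (auto simp: finite_words finite_tableaux_of split_beta)
  then show ?thesis
    by (simp add: typeB_tableaux_eq_Sigma tableau_gf_at_1 mult.commute)
qed

lemma real_WW_count_eq_sum:
  "real (WW_count (Suc m) w) = (\<Sum>j<m. if w ! j = West \<and> w ! Suc j = West then 1 else 0)"
  unfolding WW_count_eq_card by (simp add: sum.If_cases Int_def conj_commute lessThan_def)

lemma sum_WW_count_eq_sum_positions:
  "(\<Sum>T\<in>typeB_tableaux (Suc m). real (WW_count (Suc m) (fst T))) =
     (\<Sum>j<m. \<Sum>w\<in>words (Suc m). if w ! j = West \<and> w ! Suc j = West then tableau_gf w 1 else 0)"
proof -
  have indicator_mult: "(if P then 1 else 0) * x = (if P then x else 0)" for P and x :: real
    by simp
  have "(\<Sum>T\<in>typeB_tableaux (Suc m). real (WW_count (Suc m) (fst T))) =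
      (\<Sum>w\<in>words (Suc m). \<Sum>j<m. if w ! j = West \<and> w ! Suc j = West then tableau_gf w 1 else 0)"
    by (subst sum_typeB_tableaux_fst) (simp only: real_WW_count_eq_sum sum_distrib_right indicator_mult)
  then show ?thesis
    by (simp only: sum.swap[of _ "words (Suc m)"])
qed

lemma sum_linear_plus_square:
  "(\<Sum>r<m. a - 2 * (2 * real r + 3) * b + (real r + 1) ^ 2 * c) =
     real m * a - 2 * real m * (real m + 2) * b + real m * (real m + 1) * (2 * real m + 1) / 6 * c"
  by (induction m) (simp_all add: algebra_simps power2_eq_square add_divide_distrib)

lemma sum_WW_count_typeB_tableaux:
  "(\<Sum>T\<in>typeB_tableaux (N + 2). real (WW_count (N + 2) (fst T))) =
     2 ^ N * fact (N + 1) * (14 * real N ^ 2 + 31 * real N + 18) / 6"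
proof -
  let ?g = "\<lambda>r. 4 * fact (N + 2) - 2 * (2 * real r + 3) * fact (N + 1) + (real r + 1) ^ 2 * fact N"
  have "N + 2 = Suc (N + 1)"
    by simp
  then have "(\<Sum>T\<in>typeB_tableaux (N + 2). real (WW_count (N + 2) (fst T))) =
      (\<Sum>j<N + 1. \<Sum>w\<in>words (N + 2). if w ! j = West \<and> w ! Suc j = West then tableau_gf w 1 else 0)"
    by (simp only: sum_WW_count_eq_sum_positions)
  also have "\<dots> = (\<Sum>j<N + 1. 2 ^ N * ?g (N - j))"
  proof (rule sum.cong)
    fix j assume "j \<in> {..<N + 1}"
    then have "N + 2 = j + (2 + (N - j))" "j + (N - j) = N" by auto
    then show "(\<Sum>w\<in>words (N + 2). if w ! j = West \<and> w ! Suc j = West then tableau_gf w 1 else 0) =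
        2 ^ N * ?g (N - j)"
      by (simp only: sum_tableau_gf_West_West_at)
  qed simp
  also have "\<dots> = 2 ^ N * (\<Sum>r<N + 1. ?g r)"
  proof -
    have "(\<Sum>j<N + 1. ?g (N - j)) = (\<Sum>r<N + 1. ?g r)"
      using sum.nat_diff_reindex[of ?g "N + 1"] by simp
    then show ?thesis
      by (simp only: sum_distrib_left[symmetric])
  qed
  also have "\<dots> = 2 ^ N * fact (N + 1) * (14 * real N ^ 2 + 31 * real N + 18) / 6"
    unfolding sum_linear_plus_square by (simp add: algebra_simps power2_eq_square)
  finally show ?thesis .
qed

theorem mainTheorem11:
  fixes n :: nat
  assumes "n \<ge> 2"
  shows "(\<Sum>T\<in>typeB_tableaux n. real (WW_count n (fst T))) / real (card (typeB_tableaux n))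
           = (14 * real n - 25) / 24 + 1 / (2 * real n)"
proof -
  obtain N where n: "n = N + 2"
    using assms le_Suc_ex by (metis add.commute)
  have card: "real (card (typeB_tableaux (N + 2))) = 2 ^ N * fact (N + 1) * (4 * (real N + 2))"
    by (simp add: card_typeB_tableaux power_add algebra_simps)
  have "(14 * real N ^ 2 + 31 * real N + 18) / 6 / (4 * (real N + 2)) =
      (14 * real (N + 2) - 25) / 24 + 1 / (2 * real (N + 2))"
    by (simp add: field_simps power2_eq_square)
  moreover have "(2::real) ^ N * fact (N + 1) \<noteq> 0"
    by simp
  ultimately show ?thesis
    unfolding n sum_WW_count_typeB_tableaux card by (simp add: mult.assoc)
qed

end
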